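(* Let $n\ge1$ and let $G,G'$ be canonical weighted voting games on players $N=\{1,\dots,n\}$ such that $G'$ covers $G$ in the poset $(\mathcal{G}_{\mathsf{cwvg}}(n),\preceq_{\mathsf{MWC}})$, i.e., $W_{\min,G}\subset W_{\min,G'}$ and $|W_{\min,G'}|=|W_{\min,G}|+1$. Let $L_{\mathsf{ceil},G}$ be the set of ceiling coalitions of $G$. Then there exist $C\in L_{\mathsf{ceil},G}$ and an integer $i$ with $0\le i\le n$ such that $\mathsf{rtrunc}(C,i)$ is defined and $W_{\min,G'}=W_{\min,G}\cup\{\mathsf{rtrunc}(C,i)\}$.
   Context: A simple game on $N$ is a function $v:2^N\to\{0,1\}$ (all-losing allowed). $W_{\min,G}$ is the set of minimal winning coalitions (winning $S$ with every $S\setminus\{i\}$, $i\in S$, losing); maximal losing coalitions are losing $S$ with every $S\cup\{i\}$, $i\notin S$, winning. A weighted voting game has $q\ge0$, $w_i\ge0$ with $v(S)=1\iff\sum_{i\in S}w_i\ge q$. Write $i\succeq j$ if $v(S\cup\{i\})\ge v(S\cup\{j\})$ for all $S\subseteq N\setminus\{i,j\}$; a canonical weighted voting game is a weighted voting game with $1\succeq\cdots\succeq n$. A coalition $S'$ is a direct left-shift of $S$ if there is $i\in S$ with $2\le i\le n$, $i-1\notin S$ and $S'=(S\setminus\{i\})\cup\{i-1\}$; a left-shift of $S$ is a coalition obtained from $S$ by one or more successive direct left-shifts. A ceiling coalition is a maximal losing coalition all of whose left-shifts are winning. For a coalition $S$: $\mathsf{rtrunc}(S,0)=S$; for $0<i\le|S|$,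 $\mathsf{rtrunc}(S,i)$ is $S$ with its $i$ highest-numbered players removed; undefined for $i>|S|$. *)

theory Defs
  imports Complex_Main
begin

text \<open>Players are N = {1..n}; a simple game is a predicate v on coalitions
  (only its values on subsets of {1..n} are relevant).\<close>

definition players :: "nat \<Rightarrow> nat set" where
  "players n = {1..n}"

definition weighted_voting_game :: "nat \<Rightarrow> (nat set \<Rightarrow> bool) \<Rightarrow> bool" where
  "weighted_voting_game n v \<longleftrightarrow>
     (\<exists>(q::real) (w::nat \<Rightarrow> real). q \<ge> 0 \<and> (\<forall>i\<in>players n. w i \<ge> 0) \<and>
        (\<forall>S. S \<subseteq> players n \<longrightarrow> (v S \<longleftrightarrow> (\<Sum>i\<in>S. w i) \<ge> q)))"

definition desirable :: "nat \<Rightarrow> (nat set \<Rightarrow> bool) \<Rightarrow> nat \<Rightarrow> nat \<Rightarrow> bool" where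
  "desirable n v i j \<longleftrightarrow>
     (\<forall>S. S \<subseteq> players n - {i, j} \<longrightarrow> (v (S \<union> {j}) \<longrightarrow> v (S \<union> {i})))"

definition canonical_wvg :: "nat \<Rightarrow> (nat set \<Rightarrow> bool) \<Rightarrow> bool" where
  "canonical_wvg n v \<longleftrightarrow> weighted_voting_game n v \<and>
     (\<forall>i. 1 \<le> i \<and> i < n \<longrightarrow> desirable n v i (i + 1))"

definition min_winning :: "nat \<Rightarrow> (nat set \<Rightarrow> bool) \<Rightarrow> nat set set" where
  "min_winning n v = {S. S \<subseteq> players n \<and> v S \<and> (\<forall>i\<in>S. \<not> v (S - {i}))}"

definition max_losing :: "nat \<Rightarrow> (nat set \<Rightarrow> bool) \<Rightarrow> nat set \<Rightarrow> bool" where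
  "max_losing n v S \<longleftrightarrow> S \<subseteq> players n \<and> \<not> v S \<and> (\<forall>i\<in>players n - S. v (S \<union> {i}))"

definition direct_left_shift :: "nat \<Rightarrow> nat set \<Rightarrow> nat set \<Rightarrow> bool" where
  "direct_left_shift n S S' \<longleftrightarrow>
     (\<exists>i\<in>S. 2 \<le> i \<and> i \<le> n \<and> i - 1 \<notin> S \<and> S' = (S - {i}) \<union> {i - 1})"

definition left_shift :: "nat \<Rightarrow> nat set \<Rightarrow> nat set \<Rightarrow> bool" where
  "left_shift n = (direct_left_shift n)\<^sup>+\<^sup>+"

definition ceiling_coalitions :: "nat \<Rightarrow> (nat set \<Rightarrow> bool) \<Rightarrow> nat set set" where
  "ceiling_coalitions n v =
     {C. max_losing n v C \<and> (\<forall>S'. left_shift n C S' \<longrightarrow> v S')}"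

text \<open>rtrunc S i: remove the i highest-numbered players of S
  (meaningful only when i \<le> card S).\<close>
definition rtrunc :: "nat set \<Rightarrow> nat \<Rightarrow> nat set" where
  "rtrunc S i = {x\<in>S. i \<le> card {y\<in>S. x < y}}"

end

theory Submission
  imports Defs
begin

text \<open>Let S be the unique minimal winning coalition of G' that is not minimal winning in G.
  S loses in G, while every coalition obtained from S by replacing one of its players by a
  stronger player outside S wins in G' without containing S, hence wins in G. Now add to S
  players beyond its last one, choosing the added set X so that S \<union> X still loses in G and
  X has the greatest binary weight \<Sum>x\<in>X. 2^(n-x) (lexicographic order, strongest players
  first) with this property. Adding any player or shifting any player of X to the left
  increases this weight, so S \<union> X is a maximal losing coalition whose left-shifts all win,
  i.e. a ceiling coalition, and removing its card X highest-numbered players gives back S.\<close>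

lemma weighted_voting_game_mono:
  assumes "weighted_voting_game n v" "S \<subseteq> T" "T \<subseteq> players n" "v S"
  shows "v T"
proof -
  obtain q w where w: "\<forall>i\<in>players n. (w i :: real) \<ge> 0"
    and win: "\<forall>S. S \<subseteq> players n \<longrightarrow> (v S \<longleftrightarrow> (\<Sum>i\<in>S. w i) \<ge> q)"
    using assms(1) unfolding weighted_voting_game_def by blast
  have "finite T"
    using assms(3) finite_subset unfolding players_def by blast
  then have "(\<Sum>i\<in>S. w i) \<le> (\<Sum>i\<in>T. w i)"
    using assms(2,3) w by (intro sum_mono2) auto
  then show ?thesis
    using win assms by force
qed

lemma exists_min_winning_subset:
  assumes "S \<subseteq> players n" "v S"
  shows "\<exists>T\<subseteq>S. T \<in> min_winning n v"
proof -
  have "\<exists>T. (T \<subseteq> S \<and> v T) \<and> (\<forall>T'. T' \<subseteq> S \<and> v T' \<longrightarrow> card T \<le> card T')"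
    by (rule ex_has_least_nat[of _ S]) (simp add: assms(2))
  then obtain T where T: "T \<subseteq> S" "v T"
    and least: "\<And>T'. T' \<subseteq> S \<Longrightarrow> v T' \<Longrightarrow> card T \<le> card T'"
    by blast
  have "finite T"
    using T(1) assms(1) unfolding players_def by (meson finite_atLeastAtMost finite_subset subset_trans)
  have "\<not> v (T - {i})" if "i \<in> T" for i
  proof
    assume "v (T - {i})"
    then have "card T \<le> card (T - {i})"
      using least T(1) by blast
    then show False
      using card_Diff1_less[OF \<open>finite T\<close> that] by simp
  qed
  then show ?thesis
    using T assms(1) unfolding min_winning_def by blast
qed

lemma desirable_swap:
  assumes "desirable n v i j" "T \<subseteq> players n" "j \<in> T" "i \<notin> T" "v T"
  shows "v (insert i (T - {j}))"
proof -
  have "T - {j} \<subseteq> players n - {i, j}" "(T - {j}) \<union> {j} = T"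
    using assms(2-4) by auto
  then show ?thesis
    using assms(1,5) unfolding desirable_def by auto
qed

lemma desirable_trans:
  assumes ij: "desirable n v i j" and jl: "desirable n v j l"
    and "i \<noteq> j" "j \<noteq> l" "i \<noteq> l" "i \<in> players n" "j \<in> players n" "l \<in> players n"
  shows "desirable n v i l"
  unfolding desirable_def
proof (intro allI impI)
  fix S assume S: "S \<subseteq> players n - {i, l}" and "v (S \<union> {l})"
  then have win: "v (insert l S)" and l_players: "insert l S \<subseteq> players n"
    and "i \<notin> S" "l \<notin> S"
    using assms(8) by auto
  show "v (S \<union> {i})"
  proof (cases "j \<in> S")
    case False
    have "v (insert j S)" "insert j S \<subseteq> players n"
      using desirable_swap[OF jl l_players _ _ win] False \<open>l \<notin> S\<close> assms(4,7) S by auto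
    then show ?thesis
      using desirable_swap[OF ij, of "insert j S"] S False by auto
  next
    case True
    \<comment> \<open>Here j \<in> S: first let i replace j, then let j replace l.\<close>
    define T where "T = insert i (insert l S - {j})"
    have "v T" "T \<subseteq> players n"
      using desirable_swap[OF ij l_players _ _ win] True \<open>i \<notin> S\<close> assms(5,6) l_players
      unfolding T_def by auto
    then have "v (insert j (T - {l}))"
      using desirable_swap[OF jl] assms(3-5) unfolding T_def by auto
    moreover have "insert j (T - {l}) = S \<union> {i}"
      using True \<open>i \<notin> S\<close> \<open>l \<notin> S\<close> assms(3-5) unfolding T_def by auto
    ultimately show ?thesis by simp
  qed
qed

lemma canonical_wvg_desirable:
  assumes "canonical_wvg n v" "1 \<le> i" "i < j" "j \<le> n"
  shows "desirable n v i j"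
  using assms(3,4)
proof (induction j)
  case 0
  then show ?case by simp
next
  case (Suc j)
  show ?case
  proof (cases "j = i")
    case True
    then show ?thesis
      using assms(1,2) Suc.prems unfolding canonical_wvg_def by auto
  next
    case False
    then have "desirable n v i j" "desirable n v j (j + 1)"
      using Suc assms(1,2) unfolding canonical_wvg_def by auto
    then show ?thesis
      using desirable_trans Suc.prems False assms(2) unfolding players_def by auto
  qed
qed

lemma direct_left_shift_subset_players:
  assumes "direct_left_shift n T D" "T \<subseteq> players n"
  shows "D \<subseteq> players n"
  using assms unfolding direct_left_shift_def players_def by auto

lemma canonical_wvg_direct_left_shift_winning:
  assumes "canonical_wvg n v" "direct_left_shift n T D" "T \<subseteq> players n" "v T"
  shows "v D"
proof -
  obtain x where x: "x \<in> T" "2 \<le> x" "x \<le> n" "x - 1 \<notin> T" and D: "D = (T - {x}) \<union> {x - 1}"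
    using assms(2) unfolding direct_left_shift_def by blast
  have "desirable n v (x - 1) x"
    using canonical_wvg_desirable[OF assms(1)] x by simp
  then show ?thesis
    using desirable_swap assms(3,4) x D by auto
qed

lemma canonical_wvg_left_shift_winning:
  assumes "canonical_wvg n v" "T \<subseteq> players n"
    and direct: "\<And>D. direct_left_shift n T D \<Longrightarrow> v D"
    and "left_shift n T D"
  shows "v D"
proof -
  have "v D \<and> D \<subseteq> players n"
    using assms(4) unfolding left_shift_def
  proof (induction rule: tranclp_induct)
    case (base D)
    then show ?case
      using direct direct_left_shift_subset_players assms(2) by blast
  next
    case (step D E)
    then show ?case
      using canonical_wvg_direct_left_shift_winning[OF assms(1)]
        direct_left_shift_subset_players by blast
  qed
  then show ?thesis ..
qed

lemma rtrunc_Un_upper: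
  assumes "finite S" "finite X" "\<And>x y. x \<in> S \<Longrightarrow> y \<in> X \<Longrightarrow> x < y"
  shows "rtrunc (S \<union> X) (card X) = S"
proof -
  have "card X \<le> card {y\<in>S \<union> X. x < y}" if "x \<in> S" for x
    using assms that by (intro card_mono) auto
  moreover have "card {y\<in>S \<union> X. x < y} < card X" if "x \<in> X" for x
    using assms that by (intro psubset_card_mono) force+
  ultimately show ?thesis
    unfolding rtrunc_def by force
qed

definition binary_weight :: "nat \<Rightarrow> nat set \<Rightarrow> nat" where
  "binary_weight n Y = (\<Sum>x\<in>Y. 2 ^ (n - x))"

lemma binary_weight_insert_less:
  assumes "finite Y" "j \<notin> Y"
  shows "binary_weight n Y < binary_weight n (insert j Y)"
  using assms unfolding binary_weight_def by simp

lemma binary_weight_shift_less: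
  assumes "finite Y" "x \<in> Y" "x - 1 \<notin> Y" "1 \<le> x" "x \<le> n"
  shows "binary_weight n Y < binary_weight n (insert (x - 1) (Y - {x}))"
proof -
  have "binary_weight n Y = binary_weight n (Y - {x}) + 2 ^ (n - x)"
    using assms unfolding binary_weight_def by (simp add: sum.remove)
  moreover have "binary_weight n (insert (x - 1) (Y - {x})) =
      binary_weight n (Y - {x}) + 2 ^ Suc (n - x)"
    using assms unfolding binary_weight_def by (simp add: Suc_diff_le)
  ultimately show ?thesis by simp
qed

context
  fixes n :: nat and v :: "nat set \<Rightarrow> bool" and S X :: "nat set" and m :: nat
  assumes canonical: "canonical_wvg n v"
    and S_players: "S \<subseteq> players n"
    and shift_winning: "\<And>x j. x \<in> S \<Longrightarrow> 1 \<le> j \<Longrightarrow> j < x \<Longrightarrow> j \<notin> S \<Longrightarrow> v (insert j (S - {x}))"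
    and m_def: "m = Max (insert 0 S)"
    and X_above: "X \<subseteq> {m<..n}"
    and losing: "\<not> v (S \<union> X)"
    and heaviest: "\<And>Y. Y \<subseteq> {m<..n} \<Longrightarrow> binary_weight n X < binary_weight n Y \<Longrightarrow> v (S \<union> Y)"
begin

private lemma finite_S: "finite S"
  using S_players unfolding players_def by (meson finite_atLeastAtMost finite_subset)

private lemma finite_X: "finite X"
  using X_above finite_subset by blast

private lemma m_in_S: "m \<in> S \<or> m = 0"
  using finite_S m_def Max_in[of "insert 0 S"] by auto

private lemma Un_players: "S \<union> X \<subseteq> players n"
  using S_players X_above unfolding players_def by auto

lemma max_losing_Un_heaviest: "max_losing n v (S \<union> X)"
  unfolding max_losing_def
proof (intro conjI ballI Un_players losing)
  fix i assume i: "i \<in> players n - (S \<union> X)"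
  then have i_range: "1 \<le> i" "i \<le> n" "i \<noteq> m"
    using m_in_S unfolding players_def by auto
  show "v (S \<union> X \<union> {i})"
  proof (cases "i < m")
    case True
    then have "v (insert i (S - {m}))"
      using shift_winning m_in_S i i_range by auto
    moreover have "insert i (S - {m}) \<subseteq> S \<union> X \<union> {i}" "S \<union> X \<union> {i} \<subseteq> players n"
      using Un_players i by auto
    ultimately show ?thesis
      using weighted_voting_game_mono canonical unfolding canonical_wvg_def by blast
  next
    case False
    then have "insert i X \<subseteq> {m<..n}"
      using X_above i_range by auto
    then have "v (S \<union> insert i X)"
      using heaviest binary_weight_insert_less[OF finite_X] i by blast
    then show ?thesis by simp
  qed
qed

lemma direct_left_shift_Un_heaviest_winning:
  assumes "direct_left_shift n (S \<union> X) D"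
  shows "v D"
proof -
  obtain x where x: "x \<in> S \<union> X" "2 \<le> x" "x \<le> n" "x - 1 \<notin> S \<union> X"
    and D: "D = (S \<union> X - {x}) \<union> {x - 1}"
    using assms unfolding direct_left_shift_def by blast
  show ?thesis
  proof (cases "x \<in> S")
    case True
    then have "v (insert (x - 1) (S - {x}))"
      using shift_winning x by simp
    moreover have "insert (x - 1) (S - {x}) \<subseteq> D"
      using D by auto
    ultimately show ?thesis
      using weighted_voting_game_mono canonical direct_left_shift_subset_players[OF assms Un_players]
      unfolding canonical_wvg_def by blast
  next
    case False
    then have "x \<in> X" "x - 1 \<noteq> m"
      using x m_in_S by auto
    then have "insert (x - 1) (X - {x}) \<subseteq> {m<..n}"
      using X_above x by auto
    moreover have "binary_weight n X < binary_weight n (insert (x - 1) (X - {x}))"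
      using binary_weight_shift_less[OF finite_X \<open>x \<in> X\<close>] x by simp
    moreover have "S \<union> insert (x - 1) (X - {x}) = D"
      using D False by auto
    ultimately show ?thesis
      using heaviest by blast
  qed
qed

end

lemma exists_ceiling_coalition_above:
  assumes canonical: "canonical_wvg n v" and "S \<subseteq> players n" "\<not> v S"
    and "\<And>x j. x \<in> S \<Longrightarrow> 1 \<le> j \<Longrightarrow> j < x \<Longrightarrow> j \<notin> S \<Longrightarrow> v (insert j (S - {x}))"
  shows "\<exists>X\<subseteq>{Max (insert 0 S)<..n}. S \<union> X \<in> ceiling_coalitions n v"
proof -
  define m where "m = Max (insert 0 S)"
  define K where "K = {Y. Y \<subseteq> {m<..n} \<and> \<not> v (S \<union> Y)}"
  have "finite K"
    unfolding K_def by (rule finite_subset[of _ "Pow {m<..n}"]) auto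
  moreover have "{} \<in> K"
    unfolding K_def using assms(3) by simp
  ultimately obtain X where "X \<in> K" and X_max: "binary_weight n X = Max (binary_weight n ` K)"
    using Max_in[of "binary_weight n ` K"] by fastforce
  then have X: "X \<subseteq> {m<..n}" "\<not> v (S \<union> X)"
    unfolding K_def by auto
  have heaviest: "v (S \<union> Y)" if "Y \<subseteq> {m<..n}" "binary_weight n X < binary_weight n Y" for Y
  proof (rule ccontr)
    assume "\<not> v (S \<union> Y)"
    then have "binary_weight n Y \<le> Max (binary_weight n ` K)"
      using that(1) \<open>finite K\<close> unfolding K_def by simp
    then show False
      using that(2) X_max by simp
  qed
  note extension = assms(4) m_def X heaviest
  have "max_losing n v (S \<union> X)"
    by (rule max_losing_Un_heaviest[OF canonical assms(2) extension])
  moreover have "v D" if "left_shift n (S \<union> X) D" for D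
  proof (rule canonical_wvg_left_shift_winning[OF canonical _ _ that])
    show "S \<union> X \<subseteq> players n"
      using \<open>max_losing n v (S \<union> X)\<close> unfolding max_losing_def by simp
  qed (rule direct_left_shift_Un_heaviest_winning[OF canonical assms(2) extension])
  ultimately have "S \<union> X \<in> ceiling_coalitions n v"
    unfolding ceiling_coalitions_def by blast
  then show ?thesis
    using X m_def by blast
qed

lemma psubset_card_Suc_insert:
  assumes "A \<subset> B" "finite B" "card B = card A + 1"
  shows "\<exists>x\<in>B - A. B = insert x A"
proof -
  obtain x where x: "x \<in> B - A"
    using assms(1) by blast
  have "finite A"
    using assms(1,2) finite_subset by blast
  then have "insert x A = B"
    using assms x by (intro card_subset_eq) auto
  then show ?thesis
    using x by blast
qed

lemma finite_min_winning: "finite (min_winning n v)"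
  by (rule finite_subset[of _ "Pow (players n)"]) (auto simp: min_winning_def players_def)

context
  fixes n :: nat and v v' :: "nat set \<Rightarrow> bool" and S :: "nat set"
  assumes wvg: "weighted_voting_game n v" and wvg': "weighted_voting_game n v'"
    and new_min_winning: "min_winning n v' = insert S (min_winning n v)" "S \<notin> min_winning n v"
begin

lemma winning_if_not_supset_new_min_winning:
  assumes "X \<subseteq> players n" "v' X" "\<not> S \<subseteq> X"
  shows "v X"
proof -
  obtain T where T: "T \<subseteq> X" "T \<in> min_winning n v'"
    using exists_min_winning_subset[where v = v', OF assms(1,2)] by blast
  then have "T \<in> min_winning n v"
    using new_min_winning(1) assms(3) by auto
  then have "v T"
    unfolding min_winning_def by simp
  then show ?thesis
    using weighted_voting_game_mono[OF wvg T(1) assms(1)] by simp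
qed

lemma new_min_winning_losing: "\<not> v S"
proof
  assume "v S"
  have S: "S \<subseteq> players n" "\<And>x. x \<in> S \<Longrightarrow> \<not> v' (S - {x})"
    using new_min_winning(1) unfolding min_winning_def by auto
  obtain T where T: "T \<subseteq> S" "T \<in> min_winning n v"
    using exists_min_winning_subset[where v = v, OF S(1) \<open>v S\<close>] by blast
  then have "T \<noteq> S"
    using new_min_winning(2) by auto
  then obtain x where x: "x \<in> S" "T \<subseteq> S - {x}"
    using T(1) by auto
  have "v' T"
    using T(2) new_min_winning(1) unfolding min_winning_def by auto
  moreover have "S - {x} \<subseteq> players n"
    using S(1) by auto
  ultimately have "v' (S - {x})"
    using weighted_voting_game_mono[OF wvg' x(2)] by simp
  then show False
    using S(2) x(1) by simp
qed

lemma new_min_winning_shift_winning: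
  assumes "canonical_wvg n v'" "x \<in> S" "1 \<le> j" "j < x" "j \<notin> S"
  shows "v (insert j (S - {x}))"
proof -
  have S: "S \<subseteq> players n" "v' S"
    using new_min_winning(1) unfolding min_winning_def by auto
  then have "x \<le> n"
    using assms(2) unfolding players_def by auto
  then have "v' (insert j (S - {x}))"
    using desirable_swap[OF canonical_wvg_desirable[OF assms(1,3,4)] S(1) assms(2,5) S(2)] by simp
  moreover have "insert j (S - {x}) \<subseteq> players n"
    using S(1) assms(3,4) \<open>x \<le> n\<close> unfolding players_def by auto
  ultimately show ?thesis
    using winning_if_not_supset_new_min_winning assms(2,4) by blast
qed

end

theorem theorem10:
  fixes n :: nat and v v' :: "nat set \<Rightarrow> bool"
  assumes "n \<ge> 1"
    and "canonical_wvg n v" and "canonical_wvg n v'"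
    and "min_winning n v \<subset> min_winning n v'"
    and "card (min_winning n v') = card (min_winning n v) + 1"
  shows "\<exists>C\<in>ceiling_coalitions n v. \<exists>i::nat. i \<le> n \<and> i \<le> card C \<and>
           min_winning n v' = min_winning n v \<union> {rtrunc C i}"
proof -
  obtain S where S: "S \<notin> min_winning n v" and W': "min_winning n v' = insert S (min_winning n v)"
    using psubset_card_Suc_insert[OF assms(4) finite_min_winning assms(5)] by blast
  have wvg: "weighted_voting_game n v" "weighted_voting_game n v'"
    using assms(2,3) unfolding canonical_wvg_def by auto
  have S_players: "S \<subseteq> players n"
    using W' unfolding min_winning_def by auto
  obtain X where X: "X \<subseteq> {Max (insert 0 S)<..n}" and C: "S \<union> X \<in> ceiling_coalitions n v"
    using exists_ceiling_coalition_above[OF assms(2) S_players]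
      new_min_winning_losing[OF wvg W' S] new_min_winning_shift_winning[OF wvg W' S assms(3)]
    by blast
  have "finite S"
    using S_players unfolding players_def by (meson finite_atLeastAtMost finite_subset)
  then have "rtrunc (S \<union> X) (card X) = S"
    using X by (intro rtrunc_Un_upper) (auto dest: finite_subset)
  moreover have "card X \<le> card (S \<union> X)" "card X \<le> n"
    using X \<open>finite S\<close> card_mono[OF _ X] finite_subset[OF X] by (auto intro: card_mono)
  ultimately show ?thesis
    using C W' by (intro bexI[of _ "S \<union> X"] exI[of _ "card X"]) auto
qed

end
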